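(* The matrix $Z=(\alpha(i,j))_{i,j\in\mathbf N}$ has the following properties: (a) $\alpha(i,j)=\delta_{i,j}$ if $i$ is odd. (b) If $i=d2^k$ with $d$ odd and $k\ge1$, then $\alpha(i,j)=\alpha_k(j/d)$ if $d\mid j$, and $\alpha(i,j)=0$ otherwise. (c) $\alpha(im,jm)=\alpha(i,j)$ whenever $m$ is odd. (d) $Z$ is upper unitriangular. (e) $ZDZ^{-1}=J$. (f) $Z\in\mathcal{DR}_0$. Moreover, $Z$ is the unique matrix (indexed by $\mathbf N\times\mathbf N$) satisfying (a) and (e).
   Context: $\mathbf N=\{1,2,\dots\}$. For $k,m\in\mathbf N$, $\alpha_k(m)$ is the number of $k$-tuples of integers $\ge2$ with product $m$. The divisor matrix $D=(d_{i,j})$ has $d_{i,j}=1$ if $i\mid j$ and $0$ otherwise. $J=(J_{i,j})$ has $J_{i,j}=1$ if $j\in\{i,2i\}$ and $0$ otherwise. $Z$ is defined as follows: its odd-indexed rows have a single nonzero entry, equal to $1$, on the diagonal; for $i=2^kd$ with $d$ odd and $k\ge1$, the $i$-th row of $Z$ equals the $d$-th row of $(D-I)^k$. $\mathcal{DR}_0$ is the set of $\mathbf N\times\mathbf N$ complex matrices $A=(a_{i,j})$ with finitely many nonzero entries in each column for which there exist positive constants $C,c$ with $a_{i,j}=0$ whenever $i>Cj^c$ and $|a_{i,j}|\le Cj^c$ for all $i,j$. *)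

theory Defs
  imports "HOL-Analysis.Analysis"
begin

text \<open>N x N matrices are modelled as functions nat => nat => complex; only the
  entries with positive indices i, j >= 1 are meaningful (index 0 is ignored).\<close>

type_synonym cmat = "nat \<Rightarrow> nat \<Rightarrow> complex"

definition col_finite :: "cmat \<Rightarrow> bool" where
  "col_finite A \<longleftrightarrow> (\<forall>j\<ge>1. finite {i. 1 \<le> i \<and> A i j \<noteq> 0})"

text \<open>Matrix product; well defined (a finite sum) whenever B is column-finite.\<close>
definition mmult :: "cmat \<Rightarrow> cmat \<Rightarrow> cmat" (infixl "**\<^sub>M" 70) where
  "mmult A B = (\<lambda>i j. \<Sum>k\<in>{k. 1 \<le> k \<and> B k j \<noteq> 0}. A i k * B k j)"

definition idm :: cmat where
  "idm = (\<lambda>i j. if 1 \<le> i \<and> i = j then 1 else 0)"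

fun mpow :: "cmat \<Rightarrow> nat \<Rightarrow> cmat" where
  "mpow A 0 = idm"
| "mpow A (Suc n) = mmult (mpow A n) A"

definition Dm :: cmat where
  "Dm = (\<lambda>i j. if 1 \<le> i \<and> 1 \<le> j \<and> i dvd j then 1 else 0)"

definition Jm :: cmat where
  "Jm = (\<lambda>i j. if 1 \<le> i \<and> (j = i \<or> j = 2 * i) then 1 else 0)"

definition Zm :: cmat where
  "Zm = (\<lambda>i j. if i = 0 \<or> j = 0 then 0
          else if odd i then (if i = j then 1 else 0)
          else mpow (\<lambda>a b. Dm a b - idm a b) (multiplicity 2 i) (i div 2 ^ multiplicity 2 i) j)"

definition alpha :: "nat \<Rightarrow> nat \<Rightarrow> nat" where
  "alpha k m = card {xs :: nat list. length xs = k \<and> (\<forall>x\<in>set xs. 2 \<le> x) \<and> prod_list xs = m}"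

definition DR0 :: "cmat set" where
  "DR0 = {A. col_finite A \<and>
     (\<exists>C c :: real. C > 0 \<and> c > 0 \<and>
        (\<forall>i\<ge>1. \<forall>j\<ge>1. (real i > C * real j powr c \<longrightarrow> A i j = 0)
                        \<and> norm (A i j) \<le> C * real j powr c))}"

definition meq :: "cmat \<Rightarrow> cmat \<Rightarrow> bool" where
  "meq A B \<longleftrightarrow> (\<forall>i\<ge>1. \<forall>j\<ge>1. A i j = B i j)"

definition conj_to_J :: "cmat \<Rightarrow> bool" where
  "conj_to_J A \<longleftrightarrow> (\<exists>W. col_finite W \<and> meq (A **\<^sub>M W) idm \<and> meq (W **\<^sub>M A) idm
                      \<and> meq ((A **\<^sub>M Dm) **\<^sub>M W) Jm)"

end

theory Submission
  imports Defs
begin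

text \<open>
  Row i of D - I is the indicator of the proper divisors of i, so row d of (D - I)^k
  counts the ordered factorizations of j / d into k factors \<ge> 2; this gives (b), and
  (a), (c), (d) and the bound alpha_k(m) \<le> m^2 behind (f) follow from it. Since
  D = I + (D - I), the identity A D = J A says exactly that row 2i of A is row i of
  A (D - I). Z satisfies this by construction, and it is column-finite and unitriangular,
  hence invertible by back substitution, which gives (e). Conversely the relation
  computes every row of A from the row of its odd part, so (a) and (e) determine A.
\<close>

section \<open>Products of column-finite matrices\<close>

lemma mmult_eq_sum_superset:
  assumes "finite S" "{k. 1 \<le> k \<and> B k j \<noteq> 0} \<subseteq> S" "S \<subseteq> {k. 1 \<le> k}"
  shows "(A **\<^sub>M B) i j = (\<Sum>k\<in>S. A i k * B k j)"
  unfolding mmult_def by (rule sum.mono_neutral_left) (use assms in auto)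

lemma col_finiteD: "col_finite A \<Longrightarrow> j \<ge> 1 \<Longrightarrow> finite {i. 1 \<le> i \<and> A i j \<noteq> 0}"
  by (simp add: col_finite_def)

lemma mmult_idm_right: "j \<ge> 1 \<Longrightarrow> (A **\<^sub>M idm) i j = A i j"
  by (subst mmult_eq_sum_superset[of "{j}"]) (auto simp: idm_def)

lemma mmult_idm_left:
  assumes "col_finite B" "i \<ge> 1" "j \<ge> 1"
  shows "(idm **\<^sub>M B) i j = B i j"
proof -
  let ?S = "insert i {k. 1 \<le> k \<and> B k j \<noteq> 0}"
  have "(idm **\<^sub>M B) i j = (\<Sum>k\<in>?S. idm i k * B k j)"
    by (rule mmult_eq_sum_superset) (use assms col_finiteD in auto)
  also have "\<dots> = B i j"
    by (subst sum.remove[of _ i]) (use assms col_finiteD in \<open>auto simp: idm_def\<close>)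
  finally show ?thesis .
qed

lemma mmult_Jm_left:
  assumes "col_finite B" "i \<ge> 1" "j \<ge> 1"
  shows "(Jm **\<^sub>M B) i j = B i j + B (2 * i) j"
proof -
  let ?S = "{i, 2 * i} \<union> {k. 1 \<le> k \<and> B k j \<noteq> 0}"
  have "(Jm **\<^sub>M B) i j = (\<Sum>k\<in>?S. Jm i k * B k j)"
    by (rule mmult_eq_sum_superset) (use assms col_finiteD in auto)
  also have "\<dots> = (\<Sum>k\<in>{i, 2 * i}. Jm i k * B k j)"
    by (rule sum.mono_neutral_right) (use assms col_finiteD in \<open>auto simp: Jm_def\<close>)
  also have "\<dots> = B i j + B (2 * i) j"
    using assms by (simp add: Jm_def)
  finally show ?thesis .
qed

lemma mmult_cong_meq_right: "meq B B' \<Longrightarrow> j \<ge> 1 \<Longrightarrow> (A **\<^sub>M B) i j = (A **\<^sub>M B') i j"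
  unfolding mmult_def meq_def by (auto intro!: sum.cong)

lemma mmult_cong_meq_left: "meq A A' \<Longrightarrow> i \<ge> 1 \<Longrightarrow> (A **\<^sub>M B) i j = (A' **\<^sub>M B) i j"
  unfolding mmult_def meq_def by (auto intro!: sum.cong)

lemma mmult_assoc:
  assumes B: "col_finite B" and C: "col_finite C" and j: "j \<ge> 1"
  shows "((A **\<^sub>M B) **\<^sub>M C) i j = (A **\<^sub>M (B **\<^sub>M C)) i j"
proof -
  define T where "T = {k. 1 \<le> k \<and> C k j \<noteq> 0}"
  define U where "U = (\<Union>k\<in>T. {l. 1 \<le> l \<and> B l k \<noteq> 0})"
  have fT: "finite T" using col_finiteD[OF C j] by (simp add: T_def)
  have fU: "finite U" unfolding U_def using fT col_finiteD[OF B] by (auto simp: T_def)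
  have supp_BC: "{l. 1 \<le> l \<and> (B **\<^sub>M C) l j \<noteq> 0} \<subseteq> U"
  proof clarify
    fix l assume l: "1 \<le> l" "(B **\<^sub>M C) l j \<noteq> 0"
    then obtain k where "k \<in> T" "B l k * C k j \<noteq> 0"
      by (auto simp: mmult_def T_def elim: sum.not_neutral_contains_not_neutral)
    then show "l \<in> U" using l by (auto simp: U_def)
  qed
  have "((A **\<^sub>M B) **\<^sub>M C) i j = (\<Sum>k\<in>T. (A **\<^sub>M B) i k * C k j)"
    by (simp add: mmult_def[of _ C] T_def)
  also have "\<dots> = (\<Sum>k\<in>T. (\<Sum>l\<in>U. A i l * B l k) * C k j)"
    by (rule sum.cong[OF refl], subst mmult_eq_sum_superset[of U]) (use fU in \<open>auto simp: U_def\<close>)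
  also have "\<dots> = (\<Sum>l\<in>U. A i l * (\<Sum>k\<in>T. B l k * C k j))"
    by (simp add: sum_distrib_left sum_distrib_right mult.assoc sum.swap[of _ T])
  also have "\<dots> = (\<Sum>l\<in>U. A i l * (B **\<^sub>M C) l j)"
    by (rule sum.cong[OF refl], subst mmult_eq_sum_superset[of T]) (use fT in \<open>auto simp: T_def\<close>)
  also have "\<dots> = (A **\<^sub>M (B **\<^sub>M C)) i j"
    by (rule mmult_eq_sum_superset[symmetric]) (use fU supp_BC in \<open>auto simp: U_def\<close>)
  finally show ?thesis .
qed

section \<open>Unitriangular matrices\<close>

definition unitriangular :: "cmat \<Rightarrow> bool" where
  "unitriangular U \<longleftrightarrow> (\<forall>i j. 1 \<le> j \<longrightarrow> j < i \<longrightarrow> U i j = 0) \<and> (\<forall>i\<ge>1. U i i = 1)"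

lemma unitriangular_col_finite:
  assumes "unitriangular U" shows "col_finite U"
  unfolding col_finite_def
proof (intro allI impI)
  fix j :: nat assume "j \<ge> 1"
  then have "{i. 1 \<le> i \<and> U i j \<noteq> 0} \<subseteq> {..j}"
    using assms by (auto simp: unitriangular_def not_le[symmetric])
  then show "finite {i. 1 \<le> i \<and> U i j \<noteq> 0}" by (rule finite_subset) simp
qed

lemma mmult_eq_sum_upto:
  assumes "unitriangular B" "j \<ge> 1"
  shows "(A **\<^sub>M B) i j = (\<Sum>k\<in>{1..j}. A i k * B k j)"
  by (rule mmult_eq_sum_superset) (use assms in \<open>auto simp: unitriangular_def, meson not_le\<close>)

function unitri_inv :: "cmat \<Rightarrow> cmat" where
  "unitri_inv U i j = (if i = 0 \<or> j = 0 \<or> j < i then 0 else if i = j then 1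
      else - (\<Sum>k\<in>{i<..j}. U i k * unitri_inv U k j))"
  by auto
termination by (relation "Wellfounded.measure (\<lambda>(U, i, j). j - i)") auto

declare unitri_inv.simps[simp del]

lemma unitriangular_unitri_inv: "unitriangular (unitri_inv U)"
  unfolding unitriangular_def by (auto simp: unitri_inv.simps)

lemma mmult_unitri_inv:
  assumes U: "unitriangular U"
  shows "meq (U **\<^sub>M unitri_inv U) idm"
  unfolding meq_def
proof (intro allI impI)
  fix i j :: nat assume i: "i \<ge> 1" and j: "j \<ge> 1"
  let ?V = "unitri_inv U"
  have prod: "(U **\<^sub>M ?V) i j = (\<Sum>k\<in>{1..j}. U i k * ?V k j)"
    by (rule mmult_eq_sum_upto[OF unitriangular_unitri_inv j])
  show "(U **\<^sub>M ?V) i j = idm i j"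
  proof (cases "j < i")
    case True
    then show ?thesis using U by (auto simp: prod unitriangular_def idm_def intro!: sum.neutral)
  next
    case False
    have split: "{1..j} = {1..<i} \<union> {i} \<union> {i<..j}" using i False by auto
    have "(\<Sum>k\<in>{1..j}. U i k * ?V k j) =
       (\<Sum>k\<in>{1..<i}. U i k * ?V k j) + U i i * ?V i j + (\<Sum>k\<in>{i<..j}. U i k * ?V k j)"
      unfolding split by (subst sum.union_disjoint; auto)+
    also have "(\<Sum>k\<in>{1..<i}. U i k * ?V k j) = 0"
      using U by (auto simp: unitriangular_def intro!: sum.neutral)
    also have "U i i = 1" using U i by (simp add: unitriangular_def)
    finally have "(U **\<^sub>M ?V) i j = ?V i j + (\<Sum>k\<in>{i<..j}. U i k * ?V k j)"
      by (simp add: prod)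
    then show ?thesis
      using i False by (subst (asm) unitri_inv.simps) (auto simp: idm_def)
  qed
qed

lemma unitriangular_invertible:
  assumes U: "unitriangular U"
  obtains W where "col_finite W" "meq (U **\<^sub>M W) idm" "meq (W **\<^sub>M U) idm"
proof
  define W where "W = unitri_inv U"
  define W' where "W' = unitri_inv W"
  have UW: "meq (U **\<^sub>M W) idm" and WW': "meq (W **\<^sub>M W') idm"
    using mmult_unitri_inv[OF U] mmult_unitri_inv[OF unitriangular_unitri_inv] by (simp_all add: W_def W'_def)
  have fin: "col_finite W" "col_finite W'"
    using unitriangular_col_finite[OF unitriangular_unitri_inv] by (simp_all add: W_def W'_def)
  txt \<open>U is a left and W' a right inverse of W, hence U = W'.\<close>
  have "meq U W'"
    unfolding meq_def
  proof (intro allI impI)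
    fix i j :: nat assume ij: "i \<ge> 1" "j \<ge> 1"
    have "U i j = (U **\<^sub>M (W **\<^sub>M W')) i j"
      using mmult_cong_meq_right[OF WW' ij(2)] mmult_idm_right[OF ij(2)] by simp
    also have "\<dots> = ((U **\<^sub>M W) **\<^sub>M W') i j" by (rule mmult_assoc[OF fin ij(2), symmetric])
    also have "\<dots> = W' i j"
      using mmult_cong_meq_left[OF UW ij(1)] mmult_idm_left[OF fin(2) ij] by simp
    finally show "U i j = W' i j" .
  qed
  then show "meq (W **\<^sub>M U) idm"
    using WW' mmult_cong_meq_right[of U W'] by (auto simp: meq_def)
  show "col_finite W" "meq (U **\<^sub>M W) idm" by fact+
qed

section \<open>Intertwining D and J\<close>

definition proper_Dm :: cmat where
  "proper_Dm = (\<lambda>a b. Dm a b - idm a b)"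

lemma proper_Dm_eq: "proper_Dm a b = (if 1 \<le> a \<and> 1 \<le> b \<and> a dvd b \<and> a \<noteq> b then 1 else 0)"
  by (auto simp: proper_Dm_def Dm_def idm_def)

lemma mmult_proper_Dm:
  "(A **\<^sub>M proper_Dm) i j = (\<Sum>b | 1 \<le> b \<and> 1 \<le> j \<and> b dvd j \<and> b \<noteq> j. A i b)"
  unfolding mmult_def by (rule sum.cong) (auto simp: proper_Dm_eq)

lemma mmult_Dm_right:
  assumes "j \<ge> 1"
  shows "(A **\<^sub>M Dm) i j = (A **\<^sub>M proper_Dm) i j + A i j"
proof -
  have fin: "finite {b. 1 \<le> b \<and> 1 \<le> j \<and> b dvd j \<and> b \<noteq> j}"
    by (rule finite_subset[of _ "{..j}"]) (auto dest: dvd_imp_le)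
  have "{b. 1 \<le> b \<and> Dm b j \<noteq> 0} = insert j {b. 1 \<le> b \<and> 1 \<le> j \<and> b dvd j \<and> b \<noteq> j}"
    using assms by (auto simp: Dm_def)
  then have "(A **\<^sub>M Dm) i j = (\<Sum>b\<in>insert j {b. 1 \<le> b \<and> 1 \<le> j \<and> b dvd j \<and> b \<noteq> j}. A i b)"
    unfolding mmult_def by (auto simp: Dm_def intro!: sum.cong)
  also have "\<dots> = (A **\<^sub>M proper_Dm) i j + A i j"
    using fin by (simp add: mmult_proper_Dm)
  finally show ?thesis .
qed

lemma intertwines_iff_doubling:
  assumes "col_finite A"
  shows "meq (A **\<^sub>M Dm) (Jm **\<^sub>M A) \<longleftrightarrow> (\<forall>i\<ge>1. \<forall>j\<ge>1. A (2 * i) j = (A **\<^sub>M proper_Dm) i j)"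
  using assms by (auto simp: meq_def mmult_Dm_right mmult_Jm_left)

lemma conj_to_J_imp_intertwines:
  assumes A: "col_finite A" and "conj_to_J A"
  shows "meq (A **\<^sub>M Dm) (Jm **\<^sub>M A)"
proof -
  obtain W where W: "col_finite W" "meq (W **\<^sub>M A) idm" "meq ((A **\<^sub>M Dm) **\<^sub>M W) Jm"
    using \<open>conj_to_J A\<close> unfolding conj_to_J_def by blast
  show ?thesis
    unfolding meq_def
  proof (intro allI impI)
    fix i j :: nat assume i: "i \<ge> 1" and j: "j \<ge> 1"
    have "(A **\<^sub>M Dm) i j = ((A **\<^sub>M Dm) **\<^sub>M (W **\<^sub>M A)) i j"
      using mmult_cong_meq_right[OF W(2) j] mmult_idm_right[OF j] by simp
    also have "\<dots> = (((A **\<^sub>M Dm) **\<^sub>M W) **\<^sub>M A) i j"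
      by (rule mmult_assoc[OF W(1) A j, symmetric])
    also have "\<dots> = (Jm **\<^sub>M A) i j" by (rule mmult_cong_meq_left[OF W(3) i])
    finally show "(A **\<^sub>M Dm) i j = (Jm **\<^sub>M A) i j" .
  qed
qed

lemma intertwines_imp_conj_to_J:
  assumes A: "col_finite A" and W: "col_finite W" "meq (A **\<^sub>M W) idm" "meq (W **\<^sub>M A) idm"
    and AD: "meq (A **\<^sub>M Dm) (Jm **\<^sub>M A)"
  shows "conj_to_J A"
proof -
  have "meq ((A **\<^sub>M Dm) **\<^sub>M W) Jm"
    unfolding meq_def
  proof (intro allI impI)
    fix i j :: nat assume i: "i \<ge> 1" and j: "j \<ge> 1"
    have "((A **\<^sub>M Dm) **\<^sub>M W) i j = ((Jm **\<^sub>M A) **\<^sub>M W) i j"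
      by (rule mmult_cong_meq_left[OF AD i])
    also have "\<dots> = (Jm **\<^sub>M (A **\<^sub>M W)) i j" by (rule mmult_assoc[OF A W(1) j])
    also have "\<dots> = Jm i j"
      using mmult_cong_meq_right[OF W(2) j] mmult_idm_right[OF j] by simp
    finally show "((A **\<^sub>M Dm) **\<^sub>M W) i j = Jm i j" .
  qed
  then show ?thesis using W unfolding conj_to_J_def by blast
qed

lemma meq_if_odd_rows_and_doubling:
  assumes odd_rows: "\<And>i j. odd i \<Longrightarrow> j \<ge> 1 \<Longrightarrow> A i j = B i j"
    and doubling_A: "\<And>i j. i \<ge> 1 \<Longrightarrow> j \<ge> 1 \<Longrightarrow> A (2 * i) j = (A **\<^sub>M proper_Dm) i j"
    and doubling_B: "\<And>i j. i \<ge> 1 \<Longrightarrow> j \<ge> 1 \<Longrightarrow> B (2 * i) j = (B **\<^sub>M proper_Dm) i j"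
  shows "meq A B"
proof -
  have "A i j = B i j" if "i \<ge> 1" "j \<ge> 1" for i j
    using that
  proof (induction i arbitrary: j rule: less_induct)
    case (less i)
    show ?case
    proof (cases "odd i")
      case True
      then show ?thesis using odd_rows less.prems by simp
    next
      case False
      then obtain h where h: "i = 2 * h" "h \<ge> 1" "h < i" using less.prems by (auto elim!: evenE)
      have "A i j = (\<Sum>b | 1 \<le> b \<and> 1 \<le> j \<and> b dvd j \<and> b \<noteq> j. A h b)"
        using doubling_A[of h j] h less.prems by (simp add: mmult_proper_Dm)
      also have "\<dots> = (\<Sum>b | 1 \<le> b \<and> 1 \<le> j \<and> b dvd j \<and> b \<noteq> j. B h b)"
        using less.IH[OF h(3) h(2)] by (intro sum.cong) auto
      also have "\<dots> = B i j"
        using doubling_B[of h j] h less.prems by (simp add: mmult_proper_Dm)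
      finally show ?thesis .
    qed
  qed
  then show ?thesis by (simp add: meq_def)
qed

section \<open>Ordered factorizations\<close>

definition ordered_factorizations :: "nat \<Rightarrow> nat \<Rightarrow> nat list set" where
  "ordered_factorizations k m =
     {xs. length xs = k \<and> (\<forall>x\<in>set xs. 2 \<le> x) \<and> prod_list xs = m}"

lemma alpha_eq_card: "alpha k m = card (ordered_factorizations k m)"
  by (simp add: alpha_def ordered_factorizations_def)

lemma pow2_length_le_prod_list: "\<forall>x\<in>set xs. 2 \<le> (x::nat) \<Longrightarrow> 2 ^ length xs \<le> prod_list xs"
  by (induction xs) (auto intro: mult_le_mono)

lemma finite_ordered_factorizations: "finite (ordered_factorizations k m)"
proof -
  have "ordered_factorizations k m \<subseteq> {xs. set xs \<subseteq> {..m} \<and> length xs = k}"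
  proof
    fix xs assume xs: "xs \<in> ordered_factorizations k m"
    have "2 ^ length xs \<le> m"
      using xs pow2_length_le_prod_list[of xs] by (simp add: ordered_factorizations_def)
    then have "m > 0" using less_le_trans[of 0 "2 ^ length xs" m] by simp
    then have "set xs \<subseteq> {..m}"
      using xs by (auto simp: ordered_factorizations_def dest: prod_list_dvd intro: dvd_imp_le)
    then show "xs \<in> {xs. set xs \<subseteq> {..m} \<and> length xs = k}"
      using xs by (simp add: ordered_factorizations_def)
  qed
  then show ?thesis by (rule finite_subset) (simp add: finite_lists_length_eq)
qed

lemma alpha_0: "alpha 0 m = (if m = 1 then 1 else 0)"
proof -
  have "ordered_factorizations 0 m = (if m = 1 then {[]} else {})"
    by (auto simp: ordered_factorizations_def)
  then show ?thesis by (simp add: alpha_eq_card)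
qed

text \<open>Splitting off the first factor m div c identifies a factorization of m into k + 1
  factors with a proper divisor c of m together with a factorization of c into k factors.\<close>
lemma alpha_Suc: "alpha (Suc k) m = (\<Sum>c | c dvd m \<and> c < m. alpha k c)"
proof -
  define P where "P = {c. c dvd m \<and> c < m}"
  define cons_cofactor where "cons_cofactor = (\<lambda>(c::nat, ys::nat list). (m div c) # ys)"
  have finP: "finite P" by (rule finite_subset[of _ "{..<m}"]) (auto simp: P_def)
  have img: "ordered_factorizations (Suc k) m =
      cons_cofactor ` (SIGMA c:P. ordered_factorizations k c)"
  proof (intro equalityI subsetI)
    fix xs assume xs: "xs \<in> ordered_factorizations (Suc k) m"
    then obtain x ys where xys: "xs = x # ys" "x \<ge> 2" "m = x * prod_list ys"
      and ys: "ys \<in> ordered_factorizations k (prod_list ys)"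
      by (cases xs) (auto simp: ordered_factorizations_def)
    have "prod_list ys \<ge> 1"
      using pow2_length_le_prod_list[of ys] ys
      by (auto simp: ordered_factorizations_def intro: order_trans[rotated])
    then have "prod_list ys \<in> P" "m div prod_list ys = x"
      using xys by (auto simp: P_def)
    then show "xs \<in> cons_cofactor ` (SIGMA c:P. ordered_factorizations k c)"
      using ys xys by (auto simp: cons_cofactor_def intro!: image_eqI[of _ _ "(prod_list ys, ys)"])
  next
    fix xs assume "xs \<in> cons_cofactor ` (SIGMA c:P. ordered_factorizations k c)"
    then obtain c ys where c: "c dvd m" "c < m" and ys: "ys \<in> ordered_factorizations k c"
      and xs: "xs = (m div c) # ys"
      by (auto simp: P_def cons_cofactor_def)
    have "c > 0" using c by (cases c) auto
    then have "m div c \<ge> 2" using c by (auto elim!: dvdE)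
    then show "xs \<in> ordered_factorizations (Suc k) m"
      using ys xs c by (auto simp: ordered_factorizations_def)
  qed
  have "inj_on cons_cofactor (SIGMA c:P. ordered_factorizations k c)"
    by (auto simp: inj_on_def cons_cofactor_def ordered_factorizations_def)
  then have "alpha (Suc k) m = card (SIGMA c:P. ordered_factorizations k c)"
    by (simp add: alpha_eq_card img card_image)
  also have "\<dots> = (\<Sum>c\<in>P. alpha k c)"
    using finP finite_ordered_factorizations by (simp add: alpha_eq_card)
  finally show ?thesis by (simp add: P_def)
qed

lemma proper_divisor_double_le:
  assumes "c dvd (m::nat)" "c < m" shows "2 * c \<le> m"
proof -
  obtain q where q: "m = c * q" using assms(1) ..
  then have "q \<ge> 2" using assms(2) by (cases q) auto
  then show ?thesis using q by simp
qed

lemma alpha_eq_0_if_less_pow2: "m \<ge> 1 \<Longrightarrow> m < 2 ^ k \<Longrightarrow> alpha k m = 0"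
proof (induction k arbitrary: m)
  case (Suc k)
  have "alpha k c = 0" if "c dvd m" "c < m" for c
  proof (rule Suc.IH)
    show "c \<ge> 1" using that Suc.prems by (cases c) auto
    show "c < 2 ^ k" using proper_divisor_double_le[OF that] Suc.prems by simp
  qed
  then show ?case by (simp add: alpha_Suc)
qed (simp add: alpha_0)

lemma alpha_pow2_self: "alpha k (2 ^ k) = 1"
proof (induction k)
  case (Suc k)
  let ?P = "{c::nat. c dvd 2 ^ Suc k \<and> c < 2 ^ Suc k}"
  have fin: "finite ?P" by (rule finite_subset[of _ "{..<2 ^ Suc k}"]) auto
  have "alpha k c = 0" if "c \<in> ?P - {2 ^ k}" for c
  proof (rule alpha_eq_0_if_less_pow2)
    show "c \<ge> 1" using that by (cases c) auto
    show "c < 2 ^ k" using that proper_divisor_double_le[of c "2 ^ Suc k"] by auto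
  qed
  then have "alpha (Suc k) (2 ^ Suc k) = alpha k (2 ^ k)"
    using sum.remove[OF fin, of "2 ^ k" "alpha k"] by (simp add: alpha_Suc)
  then show ?case using Suc by simp
qed (simp add: alpha_0)

lemma sum_inverse_squares_le: "n \<ge> 1 \<Longrightarrow> (\<Sum>e\<in>{2..n}. 1 / real e ^ 2) \<le> 1 - 1 / real n"
proof (induction n rule: dec_induct)
  case (step n)
  have "real n * real (Suc n) \<le> real (Suc n) ^ 2" by (simp add: power2_eq_square)
  then have "1 / real (Suc n) ^ 2 \<le> 1 / (real n * real (Suc n))"
    using step(1) by (intro divide_left_mono) auto
  also have "\<dots> = 1 / real n - 1 / real (Suc n)"
    using step(1) by (simp add: field_simps)
  finally have "1 / real (Suc n) ^ 2 \<le> 1 / real n - 1 / real (Suc n)" .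
  moreover have "{2..Suc n} = insert (Suc n) {2..n}" using step(1) by auto
  ultimately show ?case using step by simp
qed simp

text \<open>The proper divisors of m are the m / e with 2 \<le> e dividing m, and the sum of
  1 / e^2 over 2 \<le> e is below 1.\<close>
lemma sum_proper_divisors_square_le:
  assumes m: "m \<ge> 1" shows "(\<Sum>c | c dvd m \<and> c < m. c ^ 2) \<le> (m::nat) ^ 2"
proof -
  define P where "P = {c. c dvd m \<and> c < m}"
  have c_pos: "c > 0" if "c \<in> P" for c using that m by (cases c) (auto simp: P_def)
  have cofactor: "real c = real m / real (m div c)" if "c \<in> P" for c
    using that c_pos[OF that] by (auto simp: P_def elim!: dvdE)
  have inj: "inj_on (\<lambda>c. m div c) P"
    by (rule inj_on_inverseI[of _ "\<lambda>e. m div e"]) (use m in \<open>auto simp: P_def div_div_eq_right\<close>)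
  have range: "(\<lambda>c. m div c) ` P \<subseteq> {2..m}"
    using c_pos proper_divisor_double_le by (force simp: P_def elim!: dvdE)
  have "real (\<Sum>c\<in>P. c ^ 2) = (\<Sum>c\<in>P. real m ^ 2 / real (m div c) ^ 2)"
    using cofactor by (simp add: power_divide)
  also have "\<dots> = (\<Sum>e\<in>(\<lambda>c. m div c) ` P. real m ^ 2 / real e ^ 2)"
    by (simp add: sum.reindex[OF inj])
  also have "\<dots> \<le> (\<Sum>e\<in>{2..m}. real m ^ 2 / real e ^ 2)"
    by (rule sum_mono2[OF _ range]) auto
  also have "\<dots> = real m ^ 2 * (\<Sum>e\<in>{2..m}. 1 / real e ^ 2)"
    by (simp add: sum_distrib_left)
  also have "\<dots> \<le> real m ^ 2"
  proof (rule mult_left_le)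
    have "0 \<le> 1 / real m" by simp
    then show "(\<Sum>e\<in>{2..m}. 1 / real e ^ 2) \<le> 1"
      using sum_inverse_squares_le[OF m] by linarith
  qed simp
  finally have "real (\<Sum>c\<in>P. c ^ 2) \<le> real (m ^ 2)" by simp
  then show ?thesis unfolding P_def of_nat_le_iff .
qed

lemma alpha_le_square: "m \<ge> 1 \<Longrightarrow> alpha k m \<le> m ^ 2"
proof (induction k arbitrary: m)
  case (Suc k)
  have "alpha (Suc k) m \<le> (\<Sum>c | c dvd m \<and> c < m. c ^ 2)"
    unfolding alpha_Suc
  proof (rule sum_mono)
    fix c assume "c \<in> {c. c dvd m \<and> c < m}"
    then have "c \<ge> 1" using Suc.prems by (cases c) auto
    then show "alpha k c \<le> c ^ 2" by (rule Suc.IH)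
  qed
  also have "\<dots> \<le> m ^ 2" by (rule sum_proper_divisors_square_le[OF Suc.prems])
  finally show ?case .
qed (simp add: alpha_0)

section \<open>The matrix Z\<close>

lemma proper_divisors_multiple:
  fixes d m :: nat
  assumes d: "d \<ge> 1" and m: "m \<ge> 1"
  shows "{b. 1 \<le> b \<and> 1 \<le> d * m \<and> b dvd d * m \<and> b \<noteq> d * m \<and> d dvd b} =
    (\<lambda>c. d * c) ` {c. c dvd m \<and> c < m}"
proof (intro equalityI subsetI)
  fix b assume "b \<in> {b. 1 \<le> b \<and> 1 \<le> d * m \<and> b dvd d * m \<and> b \<noteq> d * m \<and> d dvd b}"
  then obtain c where c: "b = d * c" "c dvd m" "c \<noteq> m"
    using d by (auto elim!: dvdE)
  then have "c < m" using m dvd_imp_le[of c m] by simp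
  then show "b \<in> (\<lambda>c. d * c) ` {c. c dvd m \<and> c < m}" using c by auto
next
  fix b assume "b \<in> (\<lambda>c. d * c) ` {c. c dvd m \<and> c < m}"
  then obtain c where c: "b = d * c" "c dvd m" "c < m" by auto
  then have "c \<ge> 1" using m by (cases c) auto
  then show "b \<in> {b. 1 \<le> b \<and> 1 \<le> d * m \<and> b dvd d * m \<and> b \<noteq> d * m \<and> d dvd b}"
    using c m d by auto
qed

lemma mpow_proper_Dm_eq_alpha:
  assumes d: "d \<ge> 1" and j: "j \<ge> 1"
  shows "mpow proper_Dm k d j = (if d dvd j then of_nat (alpha k (j div d)) else 0)"
  using j
proof (induction k arbitrary: j)
  case 0
  then show ?case using d by (auto simp: idm_def alpha_0 elim!: dvdE)
next
  case (Suc k)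
  let ?S = "{b. 1 \<le> b \<and> 1 \<le> j \<and> b dvd j \<and> b \<noteq> j}"
  have fin: "finite ?S" by (rule finite_subset[of _ "{..j}"]) (auto dest: dvd_imp_le)
  have "mpow proper_Dm (Suc k) d j = (\<Sum>b\<in>?S. mpow proper_Dm k d b)"
    by (simp add: mmult_proper_Dm)
  also have "\<dots> = (\<Sum>b\<in>?S. of_nat (if d dvd b then alpha k (b div d) else 0))"
    by (rule sum.cong) (auto simp: Suc.IH)
  also have "\<dots> = of_nat (\<Sum>b\<in>{b\<in>?S. d dvd b}. alpha k (b div d))"
    by (simp only: sum.inter_filter[OF fin] of_nat_sum)
  also have "(\<Sum>b\<in>{b\<in>?S. d dvd b}. alpha k (b div d)) = (if d dvd j then alpha (Suc k) (j div d) else 0)"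
  proof (cases "d dvd j")
    case True
    then obtain m where m: "j = d * m" "m \<ge> 1" using Suc.prems by (cases "j div d") (auto elim!: dvdE)
    have "{b\<in>?S. d dvd b} = (\<lambda>c. d * c) ` {c. c dvd m \<and> c < m}"
      using proper_divisors_multiple[OF d m(2)] m(1) by simp
    then have "(\<Sum>b\<in>{b\<in>?S. d dvd b}. alpha k (b div d)) = (\<Sum>c | c dvd m \<and> c < m. alpha k c)"
      using d by (simp add: sum.reindex inj_on_def)
    then show ?thesis using True m d by (simp add: alpha_Suc)
  qed (auto intro!: sum.neutral dest: dvd_trans)
  finally show ?case by simp
qed

lemma odd_times_pow2_decomposition:
  fixes i :: nat
  assumes "i \<ge> 1"
  obtains d k where "odd d" "i = d * 2 ^ k"
proof
  let ?k = "multiplicity 2 i"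
  show "i = i div 2 ^ ?k * 2 ^ ?k" using multiplicity_dvd[of 2 i] by simp
  show "odd (i div 2 ^ ?k)" using assms multiplicity_decompose[of i 2] by simp
qed

lemma multiplicity_two_odd_times_pow2:
  fixes d :: nat
  assumes "odd d" shows "multiplicity 2 (d * 2 ^ k) = k"
proof -
  have "multiplicity (2::nat) d = 0" using assms by (simp add: not_dvd_imp_multiplicity_0)
  moreover have "d \<noteq> 0" using odd_pos[OF assms] by simp
  ultimately show ?thesis
    by (simp add: prime_elem_multiplicity_mult_distrib)
qed

lemma Zm_eq_mpow:
  assumes d: "odd d" and j: "j \<ge> 1"
  shows "Zm (d * 2 ^ k) j = mpow proper_Dm k d j"
proof (cases k)
  case 0
  then show ?thesis using d j by (auto simp: Zm_def idm_def)
next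
  case (Suc k')
  then have "even (d * 2 ^ k)" "d * 2 ^ k \<noteq> 0" "d * 2 ^ k div 2 ^ k = d"
    using d odd_pos by auto
  then show ?thesis
    using j by (simp add: Zm_def multiplicity_two_odd_times_pow2[OF d] proper_Dm_def del: mpow.simps)
qed

lemma Zm_eq_alpha:
  assumes "odd d" "j \<ge> 1"
  shows "Zm (d * 2 ^ k) j = (if d dvd j then of_nat (alpha k (j div d)) else 0)"
  using assms Zm_eq_mpow mpow_proper_Dm_eq_alpha by (simp add: odd_pos Suc_leI)

lemma Zm_odd_row: "odd i \<Longrightarrow> j \<ge> 1 \<Longrightarrow> Zm i j = (if i = j then 1 else 0)"
  by (auto simp: Zm_def)

lemma Zm_mult_odd:
  assumes i: "i \<ge> 1" and j: "j \<ge> 1" and m: "odd m"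
  shows "Zm (i * m) (j * m) = Zm i j"
proof -
  obtain d k where d: "odd d" and i: "i = d * 2 ^ k" using odd_times_pow2_decomposition[OF i] .
  have "m > 0" using m by presburger
  then have "Zm ((d * m) * 2 ^ k) (j * m) = Zm (d * 2 ^ k) j"
    using d m j by (simp add: Zm_eq_alpha)
  then show ?thesis using i by (simp add: mult_ac)
qed

lemma unitriangular_Zm: "unitriangular Zm"
  unfolding unitriangular_def
proof (intro conjI allI impI)
  fix i j :: nat assume j: "1 \<le> j" and ji: "j < i"
  have "i \<ge> 1" using ji j by simp
  then obtain d k where d: "odd d" and i: "i = d * 2 ^ k" by (rule odd_times_pow2_decomposition)
  have "alpha k (j div d) = 0" if "d dvd j"
    using that j ji i by (intro alpha_eq_0_if_less_pow2) (auto elim!: dvdE)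
  then show "Zm i j = 0" using Zm_eq_alpha[OF d j] i by simp
next
  fix i :: nat assume "i \<ge> 1"
  then obtain d k where d: "odd d" and i: "i = d * 2 ^ k" using odd_times_pow2_decomposition by blast
  then show "Zm i i = 1" using Zm_eq_alpha[of d i k] \<open>i \<ge> 1\<close> by (simp add: odd_pos alpha_pow2_self)
qed

lemma Zm_doubling:
  assumes i: "i \<ge> 1" and j: "j \<ge> 1"
  shows "Zm (2 * i) j = (Zm **\<^sub>M proper_Dm) i j"
proof -
  obtain d k where d: "odd d" and i: "i = d * 2 ^ k" using odd_times_pow2_decomposition[OF i] .
  have "Zm (2 * i) j = (mpow proper_Dm k **\<^sub>M proper_Dm) d j"
    using Zm_eq_mpow[OF d j, of "Suc k"] i by (simp add: mult_ac)
  also have "\<dots> = (Zm **\<^sub>M proper_Dm) i j"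
    using Zm_eq_mpow[OF d] i by (simp add: mmult_proper_Dm)
  finally show ?thesis .
qed

lemma conj_to_J_Zm: "conj_to_J Zm"
proof -
  have Z: "col_finite Zm" by (rule unitriangular_col_finite[OF unitriangular_Zm])
  obtain W where "col_finite W" "meq (Zm **\<^sub>M W) idm" "meq (W **\<^sub>M Zm) idm"
    using unitriangular_invertible[OF unitriangular_Zm] .
  moreover have "meq (Zm **\<^sub>M Dm) (Jm **\<^sub>M Zm)"
    using Zm_doubling intertwines_iff_doubling[OF Z] by blast
  ultimately show ?thesis using intertwines_imp_conj_to_J[OF Z] by blast
qed

lemma Zm_entry_bound:
  assumes i: "i \<ge> 1" and j: "j \<ge> 1"
  shows "norm (Zm i j) \<le> real j ^ 2"
proof -
  obtain d k where d: "odd d" and i: "i = d * 2 ^ k" using odd_times_pow2_decomposition[OF i] .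
  have "alpha k (j div d) \<le> j ^ 2" if "d dvd j"
  proof -
    have "j div d \<ge> 1" using that j d by (auto elim!: dvdE)
    then have "alpha k (j div d) \<le> (j div d) ^ 2" by (rule alpha_le_square)
    also have "\<dots> \<le> j ^ 2" by (simp add: power_mono)
    finally show ?thesis .
  qed
  then show ?thesis using Zm_eq_alpha[OF d j] i by (simp flip: of_nat_power)
qed

lemma Zm_in_DR0: "Zm \<in> DR0"
proof -
  have "(real i > real j powr 2 \<longrightarrow> Zm i j = 0) \<and> norm (Zm i j) \<le> real j powr 2"
    if "i \<ge> 1" "j \<ge> 1" for i j
  proof -
    have pw: "real j powr 2 = real j ^ 2" using that by (simp add: powr_realpow)
    have "real j \<le> real j ^ 2" using that by (simp add: power2_eq_square)
    then have "real i > real j powr 2 \<Longrightarrow> Zm i j = 0"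
      using unitriangular_Zm that pw by (simp add: unitriangular_def)
    then show ?thesis using Zm_entry_bound[OF that] pw by simp
  qed
  then have "\<exists>C c :: real. C > 0 \<and> c > 0 \<and> (\<forall>i\<ge>1. \<forall>j\<ge>1.
      (real i > C * real j powr c \<longrightarrow> Zm i j = 0) \<and> norm (Zm i j) \<le> C * real j powr c)"
    by (intro exI[of _ 1] exI[of _ 2]) simp
  then show ?thesis
    unfolding DR0_def using unitriangular_col_finite[OF unitriangular_Zm] by blast
qed

lemma conj_to_J_unique:
  assumes A: "col_finite A" and odd_rows: "\<forall>i\<ge>1. \<forall>j\<ge>1. odd i \<longrightarrow> A i j = (if i = j then 1 else 0)"
    and "conj_to_J A"
  shows "meq A Zm"
proof (rule meq_if_odd_rows_and_doubling)
  show "A i j = Zm i j" if "odd i" "j \<ge> 1" for i j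
    using that odd_rows Zm_odd_row by (simp add: odd_pos Suc_leI)
  show "A (2 * i) j = (A **\<^sub>M proper_Dm) i j" if "i \<ge> 1" "j \<ge> 1" for i j
    using that conj_to_J_imp_intertwines[OF A \<open>conj_to_J A\<close>] intertwines_iff_doubling[OF A] by blast
  show "Zm (2 * i) j = (Zm **\<^sub>M proper_Dm) i j" if "i \<ge> 1" "j \<ge> 1" for i j
    using that by (rule Zm_doubling)
qed

theorem lemma4p4:
  shows "(\<forall>i\<ge>1. \<forall>j\<ge>1. odd i \<longrightarrow> Zm i j = (if i = j then 1 else 0))
    \<and> (\<forall>d k j. odd d \<longrightarrow> k \<ge> 1 \<longrightarrow> j \<ge> 1 \<longrightarrow>
          Zm (d * 2 ^ k) j = (if d dvd j then of_nat (alpha k (j div d)) else 0))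
    \<and> (\<forall>i\<ge>1. \<forall>j\<ge>1. \<forall>m. odd m \<longrightarrow> Zm (i * m) (j * m) = Zm i j)
    \<and> (\<forall>i\<ge>1. \<forall>j\<ge>1. (i > j \<longrightarrow> Zm i j = 0) \<and> (i = j \<longrightarrow> Zm i j = 1))
    \<and> conj_to_J Zm
    \<and> Zm \<in> DR0
    \<and> (\<forall>A. col_finite A
          \<longrightarrow> (\<forall>i\<ge>1. \<forall>j\<ge>1. odd i \<longrightarrow> A i j = (if i = j then 1 else 0))
          \<longrightarrow> conj_to_J A
          \<longrightarrow> meq A Zm)"
  using Zm_odd_row Zm_eq_alpha Zm_mult_odd unitriangular_Zm conj_to_J_Zm Zm_in_DR0 conj_to_J_unique
  by (auto simp: unitriangular_def)

end
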